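(* Let $A\in\mathbb{R}^{n\times n}$ be symmetric with all eigenvalues in $[\mu,L]$, where $0<\mu\le L$, let $b\in\mathbb{R}^n$, and let $f(x)=\frac12 x^\top A x-b^\top x$, with unique minimizer $x^*=A^{-1}b$. Fix a step size $0<\eta\le \frac{2}{L+\mu}$, a window length $m\ge 1$, a regularization parameter $\lambda>0$, and an initial point $x_0\in\mathbb{R}^n$. Let $(x_k)_{k\ge0}$ be generated by Anderson-accelerated gradient descent with relaxation parameter $\beta=1$ (described in the context), and assume $\nabla f(x_k)\neq 0$ for the indices considered. Then for every $k\ge 0$, $$\frac{\|\nabla f(x_{k+1})\|}{\|\nabla f(x_k)\|}\le \delta_k(1-\eta\mu),\qquad \delta_k:=\frac{\|\Pi_k\nabla f(x_k)\|}{\|\nabla f(x_k)\|}\le 1,$$ where $\Pi_k=I-U_k(U_k^\top U_k+\lambda I)^{-1}U_k^\top$. Moreover, for every $k\ge0$, $$\|x_{k+1}-x^*\|\le \Big(\prod_{j=0}^{k}\delta_j\Big)(1-\eta\mu)^{k+1}\frac{L}{\mu}\,\|x_0-x^*\|.$$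
   Context: Norms are Euclidean $\ell^2$ norms (operator norm for matrices). Let $G(x)=x-\eta\nabla f(x)$. Anderson-accelerated gradient descent (AA-GD) with $\beta=1$: set $x_1=G(x_0)$; for $k\ge1$, let $m_k=\min\{m,k\}$, let $U_k=[U_{k,k-m_k},\dots,U_{k,k-1}]\in\mathbb{R}^{n\times m_k}$ with columns $U_{k,j}=\nabla f(x_k)-\nabla f(x_j)$, compute the weights $(\alpha^k_{k-m_k},\dots,\alpha^k_{k-1})^\top=(U_k^\top U_k+\lambda I)^{-1}U_k^\top\nabla f(x_k)$ (the minimizer of $\|\nabla f(x_k)-U_k\alpha\|^2+\lambda\|\alpha\|^2$), set $\alpha^k_k=1-\sum_{j=k-m_k}^{k-1}\alpha^k_j$ (so the weights sum to one), and define $x_{k+1}=\sum_{j=k-m_k}^{k}\alpha^k_j G(x_j)$. For $k=0$ the matrix $U_0$ has no columns, so $\Pi_0=I$ and $\delta_0=1$. *)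

theory Defs
  imports "HOL-Analysis.Analysis"
begin

text \<open>Quadratic objective f(x) = 1/2 x^T A x - b^T x and its gradient
  (for symmetric A the gradient is A x - b).\<close>
definition quad_f :: "real^'n^'n \<Rightarrow> real^'n \<Rightarrow> real^'n \<Rightarrow> real" where
  "quad_f A b x = (1/2) * (x \<bullet> (A *v x)) - b \<bullet> x"

definition grad_f :: "real^'n^'n \<Rightarrow> real^'n \<Rightarrow> real^'n \<Rightarrow> real^'n" where
  "grad_f A b x = A *v x - b"

definition G_map :: "real^'n^'n \<Rightarrow> real^'n \<Rightarrow> real \<Rightarrow> real^'n \<Rightarrow> real^'n" where
  "G_map A b eta x = x - eta *\<^sub>R grad_f A b x"

definition is_eigenvalue :: "real^'n^'n \<Rightarrow> real \<Rightarrow> bool" where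
  "is_eigenvalue A c \<longleftrightarrow> (\<exists>v. v \<noteq> 0 \<and> A *v v = c *\<^sub>R v)"

text \<open>Anderson weights: the vector alpha (indexed by J, zero outside J) solving
  (U^T U + lambda I) alpha = U^T g, where the columns of U are u j (j in J);
  i.e. alpha = (U^T U + lambda I)^{-1} U^T g.\<close>
definition aa_weights :: "(nat \<Rightarrow> real^'n) \<Rightarrow> nat set \<Rightarrow> real^'n \<Rightarrow> real \<Rightarrow> nat \<Rightarrow> real" where
  "aa_weights u J g lam = (THE \<alpha>. (\<forall>j. j \<notin> J \<longrightarrow> \<alpha> j = 0) \<and>
      (\<forall>i\<in>J. (\<Sum>j\<in>J. (u i \<bullet> u j) * \<alpha> j) + lam * \<alpha> i = u i \<bullet> g))"

definition aa_window :: "nat \<Rightarrow> nat \<Rightarrow> nat set" where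
  "aa_window m k = {k - min m k ..< k}"

definition aa_U :: "real^'n^'n \<Rightarrow> real^'n \<Rightarrow> (nat \<Rightarrow> real^'n) \<Rightarrow> nat \<Rightarrow> nat \<Rightarrow> real^'n" where
  "aa_U A b x k j = grad_f A b (x k) - grad_f A b (x j)"

definition aa_alpha :: "real^'n^'n \<Rightarrow> real^'n \<Rightarrow> real \<Rightarrow> nat \<Rightarrow> (nat \<Rightarrow> real^'n) \<Rightarrow> nat \<Rightarrow> nat \<Rightarrow> real" where
  "aa_alpha A b lam m x k = aa_weights (aa_U A b x k) (aa_window m k) (grad_f A b (x k)) lam"

text \<open>Pi_k applied to grad f(x_k):  Pi_k g = g - U_k (U_k^T U_k + lambda I)^{-1} U_k^T g.\<close>
definition aa_Pi_grad :: "real^'n^'n \<Rightarrow> real^'n \<Rightarrow> real \<Rightarrow> nat \<Rightarrow> (nat \<Rightarrow> real^'n) \<Rightarrow> nat \<Rightarrow> real^'n" where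
  "aa_Pi_grad A b lam m x k = grad_f A b (x k) -
     (\<Sum>j\<in>aa_window m k. aa_alpha A b lam m x k j *\<^sub>R aa_U A b x k j)"

definition aa_delta :: "real^'n^'n \<Rightarrow> real^'n \<Rightarrow> real \<Rightarrow> nat \<Rightarrow> (nat \<Rightarrow> real^'n) \<Rightarrow> nat \<Rightarrow> real" where
  "aa_delta A b lam m x k = norm (aa_Pi_grad A b lam m x k) / norm (grad_f A b (x k))"

text \<open>The AA-GD (beta = 1) update: x_{k+1} = sum_{j in window} alpha_j G(x_j) + alpha_k G(x_k),
  with alpha_k = 1 - sum of the other weights.  For k = 0 the window is empty, so x_1 = G(x_0).\<close>
definition aa_next :: "real^'n^'n \<Rightarrow> real^'n \<Rightarrow> real \<Rightarrow> real \<Rightarrow> nat \<Rightarrow> (nat \<Rightarrow> real^'n) \<Rightarrow> nat \<Rightarrow> real^'n" where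
  "aa_next A b eta lam m x k =
     (\<Sum>j\<in>aa_window m k. aa_alpha A b lam m x k j *\<^sub>R G_map A b eta (x j))
     + (1 - (\<Sum>j\<in>aa_window m k. aa_alpha A b lam m x k j)) *\<^sub>R G_map A b eta (x k)"

end

theory Submission
  imports Defs
begin

(*
  Because the Anderson weights sum to one and a gradient step acts affinely, the gradient at
  x_{k+1} is (I - eta A) applied to Pi_k grad f(x_k).  The symmetric matrix I - eta A has its
  spectrum in [1 - eta L, 1 - eta mu], which the step size bound places inside
  [-(1 - eta mu), 1 - eta mu]; hence it contracts by 1 - eta mu, giving the one-step estimate.
  Iterating it and using mu |x - x*| <= |grad f(x)| and |grad f(x_0)| <= L |x_0 - x*| gives the
  estimate for the iterates.  delta_k <= 1 because Pi_k g is the residual of a ridge regression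
  of g on the columns of U_k, whose inner product with the fitted part is lam |alpha|^2 >= 0.
  The spectral bounds on quadratic forms come from the variational principle: a maximiser of the
  Rayleigh quotient on the unit sphere is an eigenvector.
*)

lemma linear_le_quadratic_imp_zero:
  fixes a c :: real
  assumes "\<And>t. 2 * t * a \<le> t\<^sup>2 * c"
  shows "a = 0"
proof (rule ccontr)
  assume "a \<noteq> 0"
  define C where "C = \<bar>c\<bar> + 1"
  have "C > 0" "c < C" unfolding C_def by auto
  have "2 * (a / C) * a \<le> (a / C)\<^sup>2 * c" by (rule assms)
  with \<open>C > 0\<close> have "2 * C * a\<^sup>2 \<le> c * a\<^sup>2" by (simp add: field_simps power2_eq_square)
  with \<open>a \<noteq> 0\<close> have "2 * C \<le> c" by simp
  with \<open>C > 0\<close> \<open>c < C\<close> show False by linarith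
qed

lemma selfadjoint_max_quadratic_form_eigenvector:
  fixes f :: "'a::real_inner \<Rightarrow> 'a"
  assumes lin: "linear f" and selfadjoint: "\<And>x y. x \<bullet> f y = f x \<bullet> y"
    and le: "\<And>w. w \<bullet> f w \<le> M * (norm w)\<^sup>2"
    and eq: "v \<bullet> f v = M * (norm v)\<^sup>2"
  shows "f v = M *\<^sub>R v"
proof -
  have "w \<bullet> (f v - M *\<^sub>R v) = 0" for w
  proof (rule linear_le_quadratic_imp_zero)
    fix t :: real
    have "(v + t *\<^sub>R w) \<bullet> f (v + t *\<^sub>R w) \<le> M * (norm (v + t *\<^sub>R w))\<^sup>2" by (rule le)
    moreover have "(v + t *\<^sub>R w) \<bullet> f (v + t *\<^sub>R w) = v \<bullet> f v + 2 * t * (w \<bullet> f v) + t\<^sup>2 * (w \<bullet> f w)"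
    proof -
      have "v \<bullet> f w = w \<bullet> f v" using selfadjoint[of v w] by (simp add: inner_commute)
      moreover have "f (v + t *\<^sub>R w) = f v + t *\<^sub>R f w"
        by (simp add: linear_add[OF lin] linear_scale[OF lin])
      ultimately show ?thesis
        by (simp add: inner_add_left inner_add_right power2_eq_square algebra_simps)
    qed
    moreover have "(norm (v + t *\<^sub>R w))\<^sup>2 = (norm v)\<^sup>2 + 2 * t * (w \<bullet> v) + t\<^sup>2 * (norm w)\<^sup>2"
      unfolding power2_norm_eq_inner
      by (simp add: inner_add_left inner_add_right inner_commute algebra_simps power2_eq_square)
    ultimately show "2 * t * (w \<bullet> (f v - M *\<^sub>R v)) \<le> t\<^sup>2 * (M * (norm w)\<^sup>2 - w \<bullet> f w)"
      using eq by (simp add: inner_diff_right algebra_simps)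
  qed
  from this[of "f v - M *\<^sub>R v"] show ?thesis by simp
qed

lemma selfadjoint_max_eigenvalue:
  fixes f :: "'a::euclidean_space \<Rightarrow> 'a"
  assumes lin: "linear f" and selfadjoint: "\<And>x y. x \<bullet> f y = f x \<bullet> y"
  obtains M v where "v \<noteq> 0" "f v = M *\<^sub>R v" "\<And>w. w \<bullet> f w \<le> M * (norm w)\<^sup>2"
proof -
  let ?q = "\<lambda>w. w \<bullet> f w"
  have "continuous_on (sphere 0 1) f"
    using lin by (simp add: linear_conv_bounded_linear linear_continuous_on)
  then have "continuous_on (sphere 0 1) ?q"
    by (intro continuous_on_inner continuous_on_id)
  moreover have "sphere (0::'a) 1 \<noteq> {}" by simp
  ultimately obtain v where v: "v \<in> sphere 0 1" and max: "\<And>w. w \<in> sphere 0 1 \<Longrightarrow> ?q w \<le> ?q v"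
    using continuous_attains_sup[OF compact_sphere] by blast
  define M where "M = ?q v"
  have le: "?q w \<le> M * (norm w)\<^sup>2" for w
  proof (cases "w = 0")
    case True
    then show ?thesis by (simp add: linear_0[OF lin])
  next
    case False
    have "?q ((1 / norm w) *\<^sub>R w) = ?q w / (norm w)\<^sup>2"
      by (simp add: linear_scale[OF lin] power2_eq_square)
    moreover have "?q ((1 / norm w) *\<^sub>R w) \<le> M"
      unfolding M_def using False by (intro max) simp
    ultimately show ?thesis using False by (simp add: divide_le_eq)
  qed
  have "f v = M *\<^sub>R v"
    using v by (intro selfadjoint_max_quadratic_form_eigenvector[OF lin selfadjoint le]) (simp add: M_def)
  with v le show ?thesis by (intro that) auto
qed

lemma selfadjoint_norm_le:
  fixes f :: "'a::real_inner \<Rightarrow> 'a"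
  assumes lin: "linear f" and selfadjoint: "\<And>x y. x \<bullet> f y = f x \<bullet> y"
    and bound: "\<And>w. \<bar>w \<bullet> f w\<bar> \<le> c * (norm w)\<^sup>2"
  shows "norm (f v) \<le> c * norm v"
proof -
  have polarization: "4 * (u \<bullet> f v) \<le> 2 * c * ((norm u)\<^sup>2 + (norm v)\<^sup>2)" for u
  proof -
    have "4 * (u \<bullet> f v) = (u + v) \<bullet> f (u + v) - (u - v) \<bullet> f (u - v)"
      using selfadjoint[of u v] inner_commute[of "f u" v]
      by (simp add: linear_add[OF lin] linear_diff[OF lin] inner_add_left inner_add_right
          inner_diff_left inner_diff_right)
    also have "\<dots> \<le> c * (norm (u + v))\<^sup>2 + c * (norm (u - v))\<^sup>2"
      using bound[of "u + v"] bound[of "u - v"] by linarith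
    also have "\<dots> = c * ((norm (u + v))\<^sup>2 + (norm (u - v))\<^sup>2)"
      by (simp add: distrib_left)
    also have "(norm (u + v))\<^sup>2 + (norm (u - v))\<^sup>2 = 2 * ((norm u)\<^sup>2 + (norm v)\<^sup>2)"
      unfolding power2_norm_eq_inner
      by (simp add: inner_add_left inner_add_right inner_diff_left inner_diff_right inner_commute)
    finally show ?thesis by (simp add: ac_simps)
  qed
  show ?thesis
  proof (cases "f v = 0")
    case True
    have "0 \<le> c * (norm v)\<^sup>2"
      using bound[of v] by linarith
    with True show ?thesis
      by (cases "v = 0") (auto simp: zero_le_mult_iff)
  next
    case False
    \<comment> \<open>take \<open>u\<close> parallel to \<open>f v\<close> with \<open>norm u = norm v\<close>\<close>
    define t where "t = norm v / norm (f v)"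
    have "(t *\<^sub>R f v) \<bullet> f v = norm v * norm (f v)" "(norm (t *\<^sub>R f v))\<^sup>2 = (norm v)\<^sup>2"
      using False by (simp_all add: t_def power2_norm_eq_inner[symmetric] power2_eq_square)
    with polarization[of "t *\<^sub>R f v"]
    have "norm v * norm (f v) \<le> norm v * (c * norm v)"
      by (simp add: power2_eq_square mult.left_commute)
    with False show ?thesis
      by (cases "v = 0") (simp_all add: linear_0[OF lin])
  qed
qed

lemma norm_ge_of_quadratic_form_ge:
  fixes f :: "'a::real_inner \<Rightarrow> 'a"
  assumes "mu * (norm v)\<^sup>2 \<le> v \<bullet> f v"
  shows "mu * norm v \<le> norm (f v)"
proof (cases "v = 0")
  case False
  have "norm v * (mu * norm v) \<le> norm v * norm (f v)"
    using assms norm_cauchy_schwarz[of v "f v"] by (simp add: power2_eq_square algebra_simps)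
  with False show ?thesis by simp
qed simp

definition ridge_normal_eq ::
    "(nat \<Rightarrow> 'a::real_inner) \<Rightarrow> nat set \<Rightarrow> 'a \<Rightarrow> real \<Rightarrow> (nat \<Rightarrow> real) \<Rightarrow> bool"
  where "ridge_normal_eq u J g lam \<alpha> \<longleftrightarrow>
    (\<forall>i\<in>J. (\<Sum>j\<in>J. (u i \<bullet> u j) * \<alpha> j) + lam * \<alpha> i = u i \<bullet> g)"

lemma ridge_normal_eq_unique:
  fixes u :: "nat \<Rightarrow> 'a::real_inner"
  assumes "finite J" "lam > 0"
    and "ridge_normal_eq u J g lam \<alpha>" "ridge_normal_eq u J g lam \<beta>"
    and "i \<in> J"
  shows "\<alpha> i = \<beta> i"
proof -
  define d where "d j = \<alpha> j - \<beta> j" for j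
  define s where "s = (\<Sum>j\<in>J. d j *\<^sub>R u j)"
  have us: "u i \<bullet> s = - lam * d i" if "i \<in> J" for i
  proof -
    have "u i \<bullet> s = (\<Sum>j\<in>J. (u i \<bullet> u j) * \<alpha> j) - (\<Sum>j\<in>J. (u i \<bullet> u j) * \<beta> j)"
      unfolding s_def d_def by (simp add: inner_sum_right sum_subtractf[symmetric] algebra_simps)
    moreover have "(\<Sum>j\<in>J. (u i \<bullet> u j) * \<alpha> j) + lam * \<alpha> i = (\<Sum>j\<in>J. (u i \<bullet> u j) * \<beta> j) + lam * \<beta> i"
      using assms(3,4) that unfolding ridge_normal_eq_def by auto
    ultimately show ?thesis by (simp add: d_def algebra_simps)
  qed
  have "s \<bullet> s = (\<Sum>i\<in>J. d i * (u i \<bullet> s))"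
    unfolding s_def by (simp add: inner_sum_left inner_commute)
  also have "\<dots> = - lam * (\<Sum>i\<in>J. (d i)\<^sup>2)"
    by (simp add: us sum_distrib_left power2_eq_square algebra_simps)
  finally have "lam * (\<Sum>i\<in>J. (d i)\<^sup>2) = - (s \<bullet> s)" by simp
  moreover have "0 \<le> (\<Sum>i\<in>J. (d i)\<^sup>2)" by (simp add: sum_nonneg)
  ultimately have "(\<Sum>i\<in>J. (d i)\<^sup>2) = 0"
    using \<open>lam > 0\<close> inner_ge_zero[of s] by (smt (verit) mult_pos_pos)
  with \<open>finite J\<close> \<open>i \<in> J\<close> show ?thesis by (simp add: sum_nonneg_eq_0_iff d_def)
qed

lemma ridge_normal_eq_solvable:
  fixes u :: "nat \<Rightarrow> 'a::euclidean_space"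
  assumes "lam > 0"
  obtains \<alpha> where "ridge_normal_eq u J g lam \<alpha>"
proof -
  \<comment> \<open>\<open>F = U U\<^sup>T + lam I\<close> is invertible, and \<open>\<alpha> = U\<^sup>T F\<^sup>-\<^sup>1 g\<close> is a solution\<close>
  define F where "F w = (\<Sum>j\<in>J. (u j \<bullet> w) *\<^sub>R u j) + lam *\<^sub>R w" for w
  have lin: "linear F"
    unfolding linear_iff F_def
    by (simp add: inner_add_right scaleR_add_left sum.distrib scaleR_sum_right algebra_simps)
  have "w = 0" if "F w = 0" for w
  proof -
    have "0 = w \<bullet> F w" using that by simp
    also have "\<dots> = (\<Sum>j\<in>J. (u j \<bullet> w)\<^sup>2) + lam * (w \<bullet> w)"
      unfolding F_def by (simp add: inner_add_right inner_sum_right power2_eq_square inner_commute)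
    finally have "lam * (w \<bullet> w) \<le> 0"
      using sum_nonneg[of J "\<lambda>j. (u j \<bullet> w)\<^sup>2"] by simp
    with \<open>lam > 0\<close> show ?thesis by (simp add: mult_le_0_iff order_antisym_conv)
  qed
  then have "inj F"
    using lin by (simp add: linear_injective_0)
  then obtain w where w: "F w = g"
    using linear_injective_imp_surjective[OF lin] by (metis surjD)
  have "ridge_normal_eq u J (F w) lam (\<lambda>j. u j \<bullet> w)"
    unfolding ridge_normal_eq_def F_def by (simp add: inner_add_right inner_sum_right mult.commute)
  with w show ?thesis by (intro that) simp
qed

lemma aa_weights_normal_eq:
  assumes "finite J" "lam > 0"
  shows "ridge_normal_eq u J g lam (aa_weights u J g lam)"
proof -
  define P where "P \<alpha> \<longleftrightarrow> (\<forall>j. j \<notin> J \<longrightarrow> \<alpha> j = 0) \<and> ridge_normal_eq u J g lam \<alpha>" for \<alpha>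
  obtain \<alpha> where \<alpha>: "ridge_normal_eq u J g lam \<alpha>"
    using ridge_normal_eq_solvable[OF \<open>lam > 0\<close>] by blast
  define \<alpha>' where "\<alpha>' j = (if j \<in> J then \<alpha> j else 0)" for j
  have "P \<alpha>'"
    using \<alpha> unfolding P_def \<alpha>'_def ridge_normal_eq_def by (simp cong: sum.cong)
  moreover have "\<beta> = \<alpha>'" if "P \<beta>" for \<beta>
  proof
    fix j
    show "\<beta> j = \<alpha>' j"
      using \<open>P \<alpha>'\<close> that ridge_normal_eq_unique[OF \<open>finite J\<close> \<open>lam > 0\<close>]
      unfolding P_def by (cases "j \<in> J") auto
  qed
  ultimately have "P (THE \<alpha>. P \<alpha>)"
    by (rule theI)
  then show ?thesis
    unfolding P_def aa_weights_def ridge_normal_eq_def by blast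
qed

lemma norm_ridge_residual_le:
  fixes u :: "nat \<Rightarrow> 'a::real_inner"
  assumes "0 \<le> lam"
    and normal: "ridge_normal_eq u J g lam \<alpha>"
  shows "norm (g - (\<Sum>j\<in>J. \<alpha> j *\<^sub>R u j)) \<le> norm g"
proof -
  define s where "s = (\<Sum>j\<in>J. \<alpha> j *\<^sub>R u j)"
  define r where "r = g - s"
  have ur: "u i \<bullet> r = lam * \<alpha> i" if "i \<in> J" for i
  proof -
    have "u i \<bullet> s = (\<Sum>j\<in>J. (u i \<bullet> u j) * \<alpha> j)"
      unfolding s_def by (simp add: inner_sum_right mult.commute)
    moreover have "(\<Sum>j\<in>J. (u i \<bullet> u j) * \<alpha> j) + lam * \<alpha> i = u i \<bullet> g"
      using normal that unfolding ridge_normal_eq_def by blast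
    ultimately show ?thesis unfolding r_def by (simp add: inner_diff_right)
  qed
  \<comment> \<open>fit and residual need not be orthogonal, but their inner product is nonnegative\<close>
  have "s \<bullet> r = lam * (\<Sum>i\<in>J. (\<alpha> i)\<^sup>2)"
    unfolding s_def by (simp add: inner_sum_left ur sum_distrib_left power2_eq_square mult.left_commute)
  then have "0 \<le> s \<bullet> r"
    using \<open>0 \<le> lam\<close> by (simp add: sum_nonneg)
  moreover have "(norm g)\<^sup>2 = (norm r)\<^sup>2 + 2 * (s \<bullet> r) + (norm s)\<^sup>2"
    unfolding r_def power2_norm_eq_inner
    by (simp add: inner_diff_left inner_diff_right inner_commute)
  ultimately have "(norm r)\<^sup>2 \<le> (norm g)\<^sup>2"
    by (smt (verit) zero_le_power2)
  then show ?thesis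
    unfolding r_def s_def by (simp add: power2_le_iff_abs_le)
qed

lemma norm_aa_Pi_grad_le:
  assumes "lam > 0"
  shows "norm (aa_Pi_grad A b lam m x k) \<le> norm (grad_f A b (x k))"
  unfolding aa_Pi_grad_def aa_alpha_def
  using assms
  by (intro norm_ridge_residual_le[where lam = lam] aa_weights_normal_eq) (auto simp: aa_window_def)

lemma aa_delta_le_1:
  assumes "lam > 0"
  shows "aa_delta A b lam m x k \<le> 1"
  using norm_aa_Pi_grad_le[OF assms]
  by (cases "grad_f A b (x k) = 0") (simp_all add: aa_delta_def divide_le_eq_1)

lemma grad_aa_next:
  "grad_f A b (aa_next A b eta lam m x k) =
     aa_Pi_grad A b lam m x k - eta *\<^sub>R (A *v aa_Pi_grad A b lam m x k)"
proof -
  define J where "J = aa_window m k"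
  define a where "a = aa_alpha A b lam m x k"
  define g where "g j = grad_f A b (x j)" for j
  define h where "h v = v - eta *\<^sub>R (A *v v)" for v :: "real^'a"
  define w where "w = 1 - (\<Sum>j\<in>J. a j)"
  have lin: "linear h"
    unfolding h_def linear_iff by (simp add: algebra_simps)
  have grad_G: "grad_f A b (G_map A b eta y) = h (grad_f A b y)" for y
    unfolding G_map_def grad_f_def h_def by (simp add: algebra_simps)
  let ?G = "\<lambda>j. G_map A b eta (x j)"
  have "grad_f A b (aa_next A b eta lam m x k) =
      A *v (\<Sum>j\<in>J. a j *\<^sub>R ?G j) + w *\<^sub>R (A *v ?G k) - ((\<Sum>j\<in>J. a j) + w) *\<^sub>R b"
    unfolding grad_f_def aa_next_def J_def[symmetric] a_def[symmetric] w_def[symmetric]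
    by (simp add: w_def algebra_simps)
  also have "\<dots> = (\<Sum>j\<in>J. a j *\<^sub>R grad_f A b (?G j)) + w *\<^sub>R grad_f A b (?G k)"
    by (simp add: grad_f_def linear_sum[OF matrix_vector_mul_linear] matrix_vector_mult_scaleR
        scaleR_sum_left sum_subtractf scaleR_diff_right algebra_simps)
  also have "\<dots> = h ((\<Sum>j\<in>J. a j *\<^sub>R g j) + w *\<^sub>R g k)"
    by (simp add: grad_G g_def linear_add[OF lin] linear_sum[OF lin] linear_scale[OF lin])
  also have "(\<Sum>j\<in>J. a j *\<^sub>R g j) + w *\<^sub>R g k = g k - (\<Sum>j\<in>J. a j *\<^sub>R (g k - g j))"
    by (simp add: w_def scaleR_diff_right sum_subtractf scaleR_sum_left algebra_simps)
  also have "\<dots> = aa_Pi_grad A b lam m x k"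
    unfolding aa_Pi_grad_def aa_U_def J_def a_def g_def ..
  finally show ?thesis unfolding h_def .
qed

lemma prod_recurrence_bound:
  fixes a d :: "nat \<Rightarrow> real"
  assumes "\<And>j. j \<le> k \<Longrightarrow> a (Suc j) \<le> d j * a j"
    and "\<And>j. j \<le> k \<Longrightarrow> 0 \<le> d j"
  shows "a (Suc k) \<le> (\<Prod>j\<le>k. d j) * a 0"
  using assms
proof (induction k)
  case 0
  then show ?case by simp
next
  case (Suc k)
  have "a (Suc (Suc k)) \<le> d (Suc k) * a (Suc k)"
    by (rule Suc.prems(1)) simp
  also have "\<dots> \<le> d (Suc k) * ((\<Prod>j\<le>k. d j) * a 0)"
    using Suc by (intro mult_left_mono) simp_all
  also have "\<dots> = (\<Prod>j\<le>Suc k. d j) * a 0"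
    by (simp add: atMost_Suc)
  finally show ?case .
qed

lemma stepsize_mult_le_one:
  fixes eta mu L :: real
  assumes "0 < mu" "mu \<le> L" "0 < eta" "eta \<le> 2 / (L + mu)"
  shows "eta * mu \<le> 1"
proof -
  have "eta * (L + mu) \<le> 2"
    using assms by (simp add: le_divide_eq)
  moreover have "eta * mu \<le> eta * L"
    using assms by simp
  ultimately show ?thesis by (simp add: distrib_left)
qed

lemma symmetric_matrix_inner_commute:
  fixes A :: "real^'n^'n"
  assumes "transpose A = A"
  shows "x \<bullet> (A *v y) = (A *v x) \<bullet> y"
  by (metis assms dot_lmul_matrix vector_transpose_matrix)

context
  fixes A :: "real^'n^'n" and mu L :: real
  assumes symm: "transpose A = A"
    and eig: "\<And>c. is_eigenvalue A c \<Longrightarrow> mu \<le> c \<and> c \<le> L"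
begin

lemma quadratic_form_upper_bound: "v \<bullet> (A *v v) \<le> L * (norm v)\<^sup>2"
proof -
  obtain M w where "w \<noteq> 0" "A *v w = M *\<^sub>R w" and le: "\<And>v. v \<bullet> (A *v v) \<le> M * (norm v)\<^sup>2"
    using selfadjoint_max_eigenvalue[OF matrix_vector_mul_linear symmetric_matrix_inner_commute[OF symm]]
    by blast
  then have "M \<le> L"
    using eig[of M] by (auto simp: is_eigenvalue_def)
  then have "M * (norm v)\<^sup>2 \<le> L * (norm v)\<^sup>2"
    by (simp add: mult_right_mono)
  with le[of v] show ?thesis by linarith
qed

lemma quadratic_form_lower_bound: "mu * (norm v)\<^sup>2 \<le> v \<bullet> (A *v v)"
proof -
  have "linear (\<lambda>v. - (A *v v))" by (simp add: linear_compose_neg)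
  moreover have "x \<bullet> - (A *v y) = - (A *v x) \<bullet> y" for x y
    using symmetric_matrix_inner_commute[OF symm] by simp
  ultimately obtain M w where "w \<noteq> 0" "- (A *v w) = M *\<^sub>R w"
    and le: "\<And>v. v \<bullet> - (A *v v) \<le> M * (norm v)\<^sup>2"
    using selfadjoint_max_eigenvalue by blast
  then have "is_eigenvalue A (- M)"
    unfolding is_eigenvalue_def by (metis minus_equation_iff scaleR_minus_left)
  then have "mu \<le> - M" using eig by blast
  then have "mu * (norm v)\<^sup>2 \<le> - M * (norm v)\<^sup>2"
    by (rule mult_right_mono) simp
  with le[of v] show ?thesis by simp
qed

lemma norm_matrix_vector_ge: "mu * norm v \<le> norm (A *v v)"
  by (rule norm_ge_of_quadratic_form_ge[of mu v "(*v) A"]) (rule quadratic_form_lower_bound)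

lemma norm_matrix_vector_le:
  assumes "0 \<le> mu"
  shows "norm (A *v v) \<le> L * norm v"
proof (rule selfadjoint_norm_le[of "(*v) A"])
  show "\<bar>w \<bullet> (A *v w)\<bar> \<le> L * (norm w)\<^sup>2" for w
    using quadratic_form_lower_bound[of w] quadratic_form_upper_bound[of w] assms
    by (smt (verit) zero_le_mult_iff zero_le_power2)
qed (simp_all add: symmetric_matrix_inner_commute[OF symm])

lemma norm_gradient_step_le:
  assumes eta: "0 < eta" "eta \<le> 2 / (L + mu)"
  shows "norm (v - eta *\<^sub>R (A *v v)) \<le> (1 - eta * mu) * norm v"
proof (rule selfadjoint_norm_le[of "\<lambda>v. v - eta *\<^sub>R (A *v v)"])
  show "linear (\<lambda>v. v - eta *\<^sub>R (A *v v))"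
    unfolding linear_iff by (simp add: algebra_simps)
  show "x \<bullet> (y - eta *\<^sub>R (A *v y)) = (x - eta *\<^sub>R (A *v x)) \<bullet> y" for x y
    using symmetric_matrix_inner_commute[OF symm, of x y] by (simp add: inner_diff_left inner_diff_right)
  have "eta * (L + mu) \<le> 2"
  proof (cases "L + mu > 0")
    case True
    with eta show ?thesis by (simp add: le_divide_eq)
  next
    case False
    with eta(1) show ?thesis using mult_nonneg_nonpos[of eta "L + mu"] by simp
  qed
  show "\<bar>w \<bullet> (w - eta *\<^sub>R (A *v w))\<bar> \<le> (1 - eta * mu) * (norm w)\<^sup>2" for w
  proof -
    have "w \<bullet> (w - eta *\<^sub>R (A *v w)) = (norm w)\<^sup>2 - eta * (w \<bullet> (A *v w))"
      by (simp add: inner_diff_right power2_norm_eq_inner)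
    moreover have "eta * (mu * (norm w)\<^sup>2) \<le> eta * (w \<bullet> (A *v w))"
      using quadratic_form_lower_bound[of w] eta by simp
    moreover have "eta * (w \<bullet> (A *v w)) \<le> eta * (L * (norm w)\<^sup>2)"
      using quadratic_form_upper_bound[of w] eta by simp
    moreover have "(eta * L - 1) * (norm w)\<^sup>2 \<le> (1 - eta * mu) * (norm w)\<^sup>2"
      using \<open>eta * (L + mu) \<le> 2\<close> by (intro mult_right_mono) (auto simp: algebra_simps)
    ultimately show ?thesis by (simp add: algebra_simps abs_le_iff)
  qed
qed

lemma matrix_vector_mult_matrix_inv:
  assumes "0 < mu"
  shows "A *v (matrix_inv A *v b) = b"
proof -
  have "inj ((*v) A)"
  proof (rule injI)
    fix y z assume "A *v y = A *v z"
    then have "mu * norm (y - z) \<le> 0"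
      using norm_matrix_vector_ge[of "y - z"] by (simp add: matrix_vector_mult_diff_distrib)
    with assms show "y = z" by (simp add: mult_le_0_iff)
  qed
  then have "invertible A"
    using matrix_left_invertible_injective invertible_left_inverse by blast
  then have "A ** matrix_inv A = mat 1"
    unfolding invertible_def matrix_inv_def by (rule someI_ex[THEN conjunct1])
  then show ?thesis by (simp add: matrix_vector_mul_assoc)
qed

lemma norm_grad_aa_gd_step_le:
  assumes eta: "0 < eta" "eta \<le> 2 / (L + mu)"
    and step: "x (Suc k) = aa_next A b eta lam m x k"
    and nonzero: "grad_f A b (x k) \<noteq> 0"
  shows "norm (grad_f A b (x (Suc k))) \<le>
    aa_delta A b lam m x k * (1 - eta * mu) * norm (grad_f A b (x k))"
proof -
  have "norm (grad_f A b (x (Suc k))) \<le> (1 - eta * mu) * norm (aa_Pi_grad A b lam m x k)"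
    unfolding step grad_aa_next by (rule norm_gradient_step_le[OF eta])
  also have "\<dots> = aa_delta A b lam m x k * (1 - eta * mu) * norm (grad_f A b (x k))"
    using nonzero by (simp add: aa_delta_def)
  finally show ?thesis .
qed

lemma norm_grad_aa_gd_le:
  assumes eta: "0 < eta" "eta \<le> 2 / (L + mu)" and "eta * mu \<le> 1"
    and step: "\<And>j. x (Suc j) = aa_next A b eta lam m x j"
    and nonzero: "\<forall>j\<le>k. grad_f A b (x j) \<noteq> 0"
  shows "norm (grad_f A b (x (Suc k))) \<le>
    (\<Prod>j\<le>k. aa_delta A b lam m x j) * (1 - eta * mu) ^ Suc k * norm (grad_f A b (x 0))"
proof -
  have "norm (grad_f A b (x (Suc k))) \<le>
      (\<Prod>j\<le>k. aa_delta A b lam m x j * (1 - eta * mu)) * norm (grad_f A b (x 0))"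
    using norm_grad_aa_gd_step_le[OF eta step] nonzero \<open>eta * mu \<le> 1\<close>
    by (intro prod_recurrence_bound) (simp_all add: aa_delta_def)
  then show ?thesis by (simp add: prod.distrib)
qed

lemma norm_sub_le_norm_grad_f:
  assumes "A *v x_star = b"
  shows "mu * norm (y - x_star) \<le> norm (grad_f A b y)"
  using norm_matrix_vector_ge[of "y - x_star"] assms by (simp add: grad_f_def matrix_vector_mult_diff_distrib)

lemma norm_grad_f_le:
  assumes "0 \<le> mu" "A *v x_star = b"
  shows "norm (grad_f A b y) \<le> L * norm (y - x_star)"
  using norm_matrix_vector_le[OF assms(1), of "y - x_star"] assms(2)
  by (simp add: grad_f_def matrix_vector_mult_diff_distrib)

end

theorem theorem3p1:
  fixes A :: "real^'n^'n" and b x0 :: "real^'n" and x :: "nat \<Rightarrow> real^'n"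
    and mu L eta lam :: real and m :: nat
  assumes symm: "transpose A = A"
    and eig: "\<And>c. is_eigenvalue A c \<Longrightarrow> mu \<le> c \<and> c \<le> L"
    and muL: "0 < mu" "mu \<le> L"
    and eta: "0 < eta" "eta \<le> 2 / (L + mu)"
    and m: "m \<ge> 1"
    and lam: "lam > 0"
    and x0: "x 0 = x0"
    and step: "\<And>k. x (Suc k) = aa_next A b eta lam m x k"
  shows "\<forall>k. (\<forall>j\<le>k. grad_f A b (x j) \<noteq> 0) \<longrightarrow>
      norm (grad_f A b (x (Suc k))) / norm (grad_f A b (x k))
        \<le> aa_delta A b lam m x k * (1 - eta * mu)
      \<and> aa_delta A b lam m x k \<le> 1
      \<and> norm (x (Suc k) - matrix_inv A *v b)
        \<le> (\<Prod>j\<le>k. aa_delta A b lam m x j) * (1 - eta * mu) ^ (Suc k) * (L / mu)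
           * norm (x0 - matrix_inv A *v b)"
proof (intro allI impI, goal_cases)
  case (1 k)
  then have nonzero: "\<forall>j\<le>k. grad_f A b (x j) \<noteq> 0" .
  define x_star where "x_star = matrix_inv A *v b"
  let ?P = "(\<Prod>j\<le>k. aa_delta A b lam m x j) * (1 - eta * mu) ^ Suc k"
  have minimizer: "A *v x_star = b"
    unfolding x_star_def using symm eig muL(1) by (rule matrix_vector_mult_matrix_inv)
  have "eta * mu \<le> 1"
    using muL eta by (rule stepsize_mult_le_one)
  then have "0 \<le> ?P"
    by (simp add: aa_delta_def prod_nonneg)
  have "mu * norm (x (Suc k) - x_star) \<le> norm (grad_f A b (x (Suc k)))"
    using symm eig minimizer by (rule norm_sub_le_norm_grad_f)
  also have "\<dots> \<le> ?P * norm (grad_f A b (x 0))"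
    using symm eig eta \<open>eta * mu \<le> 1\<close> step nonzero by (rule norm_grad_aa_gd_le)
  also have "\<dots> \<le> ?P * (L * norm (x0 - x_star))"
    using norm_grad_f_le[OF symm eig _ minimizer] muL x0 \<open>0 \<le> ?P\<close> by (simp add: mult_left_mono)
  finally have "norm (x (Suc k) - x_star) \<le> ?P * (L / mu) * norm (x0 - x_star)"
    using muL(1) by (simp add: pos_le_divide_eq mult_ac)
  moreover have "norm (grad_f A b (x (Suc k))) / norm (grad_f A b (x k))
      \<le> aa_delta A b lam m x k * (1 - eta * mu)"
    using norm_grad_aa_gd_step_le[OF symm eig eta step] nonzero by (simp add: pos_divide_le_eq)
  ultimately show ?case
    using aa_delta_le_1[OF lam] unfolding x_star_def by blast
qed

end
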